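(* Let $N\ge1$, $h,\varepsilon\in(0,1)$, let $\Phi$ be the opinion operator defined in the context, let $V^0=(v^0_1,\dots,v^0_N)\in[-1,1]^N$ with $v^0_1\le\dots\le v^0_N$, and let $V^n=\Phi^n(V^0)=(v^n_1,\dots,v^n_N)$. If $v^0_k\ge\varepsilon$ for some $k$, then there exists $n_0\ge0$ such that $v^n_k=1$ for all $n\ge n_0$.
   Context: For $V=(v_1,\dots,v_N)\in[-1,1]^N$ and each $k$, let $J(v_k)=\{l\in\{1,\dots,N\}:|v_l-v_k|\le\varepsilon\}$ and $I(v_k)=|J(v_k)|$. Put $w_k(V)=v_k+\frac{h}{I(v_k)}\sum_{l\in J(v_k)}v_l$. Then $\Phi(V)=(v_1',\dots,v_N')$ where $v_k'=-1$ if $w_k<-1$, $v_k'=1$ if $w_k>1$, and $v_k'=w_k$ if $|w_k|\le1$. *)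

theory Defs
  imports Main "HOL.Real"
begin

text \<open>Opinion vectors V = (v_1,...,v_N) are represented as functions nat => real,
  meaningful on the index set {1..N}; the operator sets entries outside {1..N} to 0.\<close>

definition opJ :: "nat \<Rightarrow> real \<Rightarrow> (nat \<Rightarrow> real) \<Rightarrow> nat \<Rightarrow> nat set" where
  "opJ N eps V k = {l \<in> {1..N}. \<bar>V l - V k\<bar> \<le> eps}"

definition opI :: "nat \<Rightarrow> real \<Rightarrow> (nat \<Rightarrow> real) \<Rightarrow> nat \<Rightarrow> nat" where
  "opI N eps V k = card (opJ N eps V k)"

definition opw :: "nat \<Rightarrow> real \<Rightarrow> real \<Rightarrow> (nat \<Rightarrow> real) \<Rightarrow> nat \<Rightarrow> real" where
  "opw N h eps V k = V k + h / real (opI N eps V k) * (\<Sum>l\<in>opJ N eps V k. V l)"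

definition Phi :: "nat \<Rightarrow> real \<Rightarrow> real \<Rightarrow> (nat \<Rightarrow> real) \<Rightarrow> (nat \<Rightarrow> real)" where
  "Phi N h eps V = (\<lambda>k. if k \<in> {1..N} then
      (let w = opw N h eps V k in if w < -1 then -1 else if w > 1 then 1 else w)
    else 0)"

end

theory Submission
  imports Defs
begin

text \<open>While \<open>v\<^sub>k \<ge> \<epsilon>\<close>, every opinion \<open>v\<^sub>l\<close> with \<open>l \<in> J(v\<^sub>k)\<close> satisfies \<open>v\<^sub>l \<ge> v\<^sub>k - \<epsilon> \<ge> 0\<close>,
  so the sum over \<open>J(v\<^sub>k)\<close> is at least \<open>v\<^sub>k \<ge> \<epsilon>\<close> and, as \<open>I(v\<^sub>k) \<le> N\<close>, one application
  of \<open>\<Phi>\<close> raises \<open>v\<^sub>k\<close> by at least \<open>h\<epsilon>/N\<close> unless it is clipped at 1. Hence \<open>v\<^sub>k\<close> stays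
  above \<open>\<epsilon>\<close>, reaches 1 after finitely many steps and is clipped back to 1 ever after.\<close>

lemma eventually_one_if_min_increment:
  fixes x :: "nat \<Rightarrow> real"
  assumes "0 < c" "a \<le> 1" "a \<le> x 0"
    and step: "\<And>n. a \<le> x n \<Longrightarrow> min 1 (x n + c) \<le> x (Suc n)"
    and le_one: "\<And>n. x (Suc n) \<le> 1"
  shows "\<exists>n0. \<forall>n\<ge>n0. x n = 1"
proof -
  have lower: "min 1 (a + real n * c) \<le> x n" for n
  proof (induction n)
    case 0
    then show ?case using \<open>a \<le> x 0\<close> by simp
  next
    case (Suc n)
    have "a \<le> min 1 (a + real n * c)" using \<open>0 < c\<close> \<open>a \<le> 1\<close> by simp
    then have "a \<le> x n" using Suc by linarith
    then have "min 1 (x n + c) \<le> x (Suc n)" by (rule step)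
    then show ?case using Suc \<open>0 < c\<close> by (simp add: algebra_simps min_def split: if_splits)
  qed
  obtain m :: nat where m: "1 - a < real m * c"
    using reals_Archimedean3[OF \<open>0 < c\<close>] by blast
  have "x n = 1" if "Suc m \<le> n" for n
  proof -
    obtain p where p: "n = Suc p" using \<open>Suc m \<le> n\<close> by (cases n) auto
    have "real m * c \<le> real n * c" using \<open>Suc m \<le> n\<close> \<open>0 < c\<close> by simp
    then have "1 \<le> x n" using lower[of n] m by linarith
    then show ?thesis using le_one[of p] p by simp
  qed
  then show ?thesis by blast
qed

lemma Phi_le_one: "k \<in> {1..N} \<Longrightarrow> Phi N h eps V k \<le> 1"
  by (auto simp: Phi_def Let_def)

lemma finite_opJ: "finite (opJ N eps V k)"
  by (simp add: opJ_def)

lemma opJ_subset: "opJ N eps V k \<subseteq> {1..N}"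
  by (auto simp: opJ_def)

lemma mem_opJ_self: "k \<in> {1..N} \<Longrightarrow> 0 \<le> eps \<Longrightarrow> k \<in> opJ N eps V k"
  by (simp add: opJ_def)

lemma sum_opJ_ge_self:
  assumes "k \<in> {1..N}" "0 \<le> eps" "eps \<le> V k"
  shows "V k \<le> (\<Sum>l\<in>opJ N eps V k. V l)"
proof -
  let ?J = "opJ N eps V k"
  have "\<forall>l\<in>?J - {k}. 0 \<le> V l" using assms(3) by (auto simp: opJ_def)
  then have "0 \<le> (\<Sum>l\<in>?J - {k}. V l)" by (meson sum_nonneg)
  moreover have "(\<Sum>l\<in>?J. V l) = V k + (\<Sum>l\<in>?J - {k}. V l)"
    using finite_opJ mem_opJ_self[OF assms(1,2)] by (rule sum.remove)
  ultimately show ?thesis by linarith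
qed

lemma opw_ge:
  assumes "k \<in> {1..N}" "0 < h" "0 \<le> eps" "eps \<le> V k"
  shows "V k + h * eps / real N \<le> opw N h eps V k"
proof -
  let ?J = "opJ N eps V k"
  have "0 < card ?J" using finite_opJ mem_opJ_self[OF assms(1,3)] card_gt_0_iff by blast
  moreover have "card ?J \<le> N" using card_mono[OF _ opJ_subset] by simp
  ultimately have "h / real N \<le> h / real (card ?J)"
    using \<open>0 < h\<close> by (simp add: frac_le)
  moreover have "eps \<le> (\<Sum>l\<in>?J. V l)"
    using sum_opJ_ge_self[of k N eps V, OF assms(1,3,4)] assms(4) by linarith
  ultimately have "h / real N * eps \<le> h / real (card ?J) * (\<Sum>l\<in>?J. V l)"
    using assms(2,3) by (intro mult_mono) auto
  then show ?thesis by (simp add: opw_def opI_def)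
qed

lemma Phi_ge_min:
  assumes "k \<in> {1..N}" "0 < h" "0 \<le> eps" "eps \<le> V k"
  shows "min 1 (V k + h * eps / real N) \<le> Phi N h eps V k"
proof -
  have "0 \<le> V k + h * eps / real N" using assms by simp
  then show ?thesis using opw_ge[of k N h eps V, OF assms] assms(1) by (auto simp: Phi_def Let_def)
qed

theorem lemma3:
  fixes N :: nat and h eps :: real and V0 :: "nat \<Rightarrow> real" and k :: nat
  assumes "N \<ge> 1"
    and "0 < h" "h < 1" and "0 < eps" "eps < 1"
    and "\<forall>i\<in>{1..N}. -1 \<le> V0 i \<and> V0 i \<le> 1"
    and "\<forall>i j. 1 \<le> i \<and> i \<le> j \<and> j \<le> N \<longrightarrow> V0 i \<le> V0 j"
    and "k \<in> {1..N}" and "V0 k \<ge> eps"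
  shows "\<exists>n0. \<forall>n\<ge>n0. ((Phi N h eps ^^ n) V0) k = 1"
proof (rule eventually_one_if_min_increment)
  show "0 < h * eps / real N" using assms(1,2,4) by simp
  show "eps \<le> 1" "eps \<le> (Phi N h eps ^^ 0) V0 k" using assms(5,9) by simp_all
  show "min 1 ((Phi N h eps ^^ n) V0 k + h * eps / real N) \<le> (Phi N h eps ^^ Suc n) V0 k"
    if "eps \<le> (Phi N h eps ^^ n) V0 k" for n
    using Phi_ge_min[of k N h eps "(Phi N h eps ^^ n) V0", OF assms(8,2) _ that] assms(4) by simp
  show "(Phi N h eps ^^ Suc n) V0 k \<le> 1" for n
    using Phi_le_one[OF assms(8)] by simp
qed

end
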